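(* Let $\mathbb{K}$ be a field of characteristic zero, $\delta\in\mathbb{K}$, and $\lambda$ a bipartition. (i) Suppose that for every $\mu\in\operatorname{Rem}^\bullet(\lambda)$ there exists $\nu\in\operatorname{Add}^\circ(\lambda)$ with $D_{\nu,\mu}(\delta)=1$. Then $x_\lambda(\delta)$ has no pair of adjacent vertices $j,j+1$ labelled $(\vee,\wedge)$, $(\bigcirc,\wedge)$, or $(\vee,\times)$. (ii) Suppose that for every $\mu\in\operatorname{Rem}^\circ(\lambda)$ there exists $\nu\in\operatorname{Add}^\bullet(\lambda)$ with $D_{\nu,\mu}(\delta)=1$. Then $x_\lambda(\delta)$ has no pair of adjacent vertices $j,j+1$ labelled $(\vee,\wedge)$, $(\vee,\bigcirc)$, or $(\times,\wedge)$.
   Context: A partition is a weakly decreasing sequence $\alpha=(\alpha_1,\alpha_2,\dots)$ of nonnegative integers, almost all zero. A bipartition is a pair $\lambda=(\lambda^\bullet,\lambda^\circ)$ of partitions. $\operatorname{Add}^\bullet(\lambda)$ (resp. $\operatorname{Add}^\circ(\lambda)$) is the set of bipartitions obtained from $\lambda$ by adding a box to $\lambda^\bullet$ (resp. $\lambda^\circ$). $\operatorname{Rem}^\bullet(\lambda)$ and $\operatorname{Rem}^\circ(\lambda)$ are defined likewise by removing a box. Set $I_\wedge(\lambda)=\{\lambda^\bullet_i-(i-1):i\ge1\}$ and $I_\vee(\lambda,\delta)=\{i-\delta-\lambda^\circ_i:i\ge1\}$. The weight diagram $x_\lambda(\delta)$ labels each integer $j$ by: - $\bigcirc$ if $j$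 is in neither set; - $\wedge$ if $j$ is only in $I_\wedge(\lambda)$; - $\vee$ if $j$ is only in $I_\vee(\lambda,\delta)$; - $\times$ if $j$ is in both. The cap diagram $c_\lambda(\delta)$ is built from $x_\lambda(\delta)$ iteratively. At each step, draw a cap connecting $i<j$ whenever $i$ is labelled $\vee$, $j$ is labelled $\wedge$, and every integer strictly between them is labelled $\bigcirc$ or $\times$ or already lies on an earlier cap. Repeat until no more caps can be drawn. Vertices joined by a cap are connected. $x_\mu(\delta)$ is linked to $x_\lambda(\delta)$ if it is obtained from $x_\lambda(\delta)$ by interchanging labels on finitely many pairs of connected vertices. $D_{\lambda,\mu}(\delta)=1$ if $x_\mu(\delta)$ is linked to $x_\lambda(\delta)$, and $0$ otherwise. *)

theory Defs
  imports Main
begin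

text \<open>Partitions are represented 0-indexed: a function p :: nat => nat with
  alpha_i = p (i - 1) for i >= 1, weakly decreasing and almost all zero.\<close>

type_synonym partition = "nat \<Rightarrow> nat"
type_synonym bipartition = "partition \<times> partition"

definition is_partition :: "partition \<Rightarrow> bool" where
  "is_partition p \<longleftrightarrow> (\<forall>i j. i \<le> j \<longrightarrow> p j \<le> p i) \<and> finite {i. p i \<noteq> 0}"

definition is_bipartition :: "bipartition \<Rightarrow> bool" where
  "is_bipartition lam \<longleftrightarrow> is_partition (fst lam) \<and> is_partition (snd lam)"

definition add_box :: "partition \<Rightarrow> partition set" where
  "add_box p = {q. is_partition q \<and> (\<exists>k. q = p(k := p k + 1))}"

definition rem_box :: "partition \<Rightarrow> partition set" where
  "rem_box p = {q. is_partition q \<and> (\<exists>k. 0 < p k \<and> q = p(k := p k - 1))}"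

definition Add_bullet :: "bipartition \<Rightarrow> bipartition set" where
  "Add_bullet lam = {(a, snd lam) | a. a \<in> add_box (fst lam)}"

definition Add_circ :: "bipartition \<Rightarrow> bipartition set" where
  "Add_circ lam = {(fst lam, b) | b. b \<in> add_box (snd lam)}"

definition Rem_bullet :: "bipartition \<Rightarrow> bipartition set" where
  "Rem_bullet lam = {(a, snd lam) | a. a \<in> rem_box (fst lam)}"

definition Rem_circ :: "bipartition \<Rightarrow> bipartition set" where
  "Rem_circ lam = {(fst lam, b) | b. b \<in> rem_box (snd lam)}"

text \<open>I_wedge(lambda) = { lambda^bullet_i - (i-1) : i >= 1 } (a set of integers);
  with i = k + 1 this is { p k - k }.\<close>
definition I_wedge :: "bipartition \<Rightarrow> int set" where
  "I_wedge lam = {int (fst lam k) - int k | k. True}"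

definition I_vee :: "bipartition \<Rightarrow> 'k::field_char_0 \<Rightarrow> 'k set" where
  "I_vee lam \<delta> = {of_nat (Suc k) - \<delta> - of_nat (snd lam k) | k. True}"

datatype label = Circ | Wedge | Vee | Cross

definition weight_diagram :: "bipartition \<Rightarrow> 'k::field_char_0 \<Rightarrow> int \<Rightarrow> label" where
  "weight_diagram lam \<delta> j =
     (if j \<in> I_wedge lam then (if of_int j \<in> I_vee lam \<delta> then Cross else Wedge)
      else (if of_int j \<in> I_vee lam \<delta> then Vee else Circ))"

definition on_caps :: "(int \<times> int) set \<Rightarrow> int set" where
  "on_caps C = fst ` C \<union> snd ` C"

fun caps_upto :: "(int \<Rightarrow> label) \<Rightarrow> nat \<Rightarrow> (int \<times> int) set" where
  "caps_upto x 0 = {}"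
| "caps_upto x (Suc n) = caps_upto x n \<union>
     {(i, j). i < j \<and> x i = Vee \<and> x j = Wedge
        \<and> i \<notin> on_caps (caps_upto x n) \<and> j \<notin> on_caps (caps_upto x n)
        \<and> (\<forall>k. i < k \<and> k < j \<longrightarrow> x k \<in> {Circ, Cross} \<or> k \<in> on_caps (caps_upto x n))}"

definition caps :: "(int \<Rightarrow> label) \<Rightarrow> (int \<times> int) set" where
  "caps x = (\<Union>n. caps_upto x n)"

definition linked :: "(int \<Rightarrow> label) \<Rightarrow> (int \<Rightarrow> label) \<Rightarrow> bool" where
  "linked x y \<longleftrightarrow> (\<exists>S. finite S \<and> S \<subseteq> caps x
      \<and> (\<forall>(i, j) \<in> S. y i = x j \<and> y j = x i)
      \<and> (\<forall>k. k \<notin> on_caps S \<longrightarrow> y k = x k))"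

definition D :: "bipartition \<Rightarrow> bipartition \<Rightarrow> 'k::field_char_0 \<Rightarrow> nat" where
  "D lam mu \<delta> = (if linked (weight_diagram lam \<delta>) (weight_diagram mu \<delta>) then 1 else 0)"

end

theory Submission
  imports Defs
begin

text \<open>Removing a box from row k of the first (resp. second) partition moves a single
  wedge-position one step to the left (resp. a single vee-position one step to the right).
  A forbidden pair at j, j + 1 yields a removable box whose removal moves such a position
  across the pair; call the result mu. Linking only swaps the labels vee and wedge along
  caps, so every circle or cross of the diagram of mu is the same label in the diagram of
  any nu linked to it, while nu, having changed only the other partition, keeps the
  wedge-set (resp. vee-set) of lambda. But at j or j + 1 the diagram of mu shows a circle
  or cross whose wedge- (resp. vee-) membership differs from that of lambda.\<close>

lemma weight_diagram_eq_iff: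
  "weight_diagram lam \<delta> j = Circ \<longleftrightarrow> j \<notin> I_wedge lam \<and> of_int j \<notin> I_vee lam \<delta>"
  "weight_diagram lam \<delta> j = Wedge \<longleftrightarrow> j \<in> I_wedge lam \<and> of_int j \<notin> I_vee lam \<delta>"
  "weight_diagram lam \<delta> j = Vee \<longleftrightarrow> j \<notin> I_wedge lam \<and> of_int j \<in> I_vee lam \<delta>"
  "weight_diagram lam \<delta> j = Cross \<longleftrightarrow> j \<in> I_wedge lam \<and> of_int j \<in> I_vee lam \<delta>"
  by (simp_all add: weight_diagram_def)

lemma caps_labels: "(i, j) \<in> caps x \<Longrightarrow> x i = Vee \<and> x j = Wedge"
proof -
  have "(i, j) \<in> caps_upto x n \<Longrightarrow> x i = Vee \<and> x j = Wedge" for n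
    by (induction n) auto
  then show "(i, j) \<in> caps x \<Longrightarrow> x i = Vee \<and> x j = Wedge"
    unfolding caps_def by blast
qed

lemma linked_fixes_Circ_Cross:
  assumes "linked x y" and "y k \<in> {Circ, Cross}"
  shows "x k = y k"
proof -
  obtain S where S: "S \<subseteq> caps x" "\<forall>(i, j) \<in> S. y i = x j \<and> y j = x i"
    "\<forall>k. k \<notin> on_caps S \<longrightarrow> y k = x k"
    using assms(1) unfolding linked_def by blast
  show ?thesis
  proof (cases "k \<in> on_caps S")
    case True
    then obtain i j where ij: "(i, j) \<in> S" "k = i \<or> k = j"
      unfolding on_caps_def by force
    with S(1) have "x i = Vee \<and> x j = Wedge"
      using caps_labels by blast
    with ij S(2) assms(2) show ?thesis by auto
  qed (use S in simp)
qed

lemma linked_weight_diagram_memberships: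
  assumes "linked (weight_diagram nu \<delta>) (weight_diagram mu \<delta>)"
    and "t \<in> I_wedge mu \<longleftrightarrow> of_int t \<in> I_vee mu \<delta>"
  shows "(t \<in> I_wedge nu \<longleftrightarrow> t \<in> I_wedge mu) \<and> (of_int t \<in> I_vee nu \<delta> \<longleftrightarrow> of_int t \<in> I_vee mu \<delta>)"
proof -
  have label: "weight_diagram mu \<delta> t \<in> {Circ, Cross}"
    using assms(2) by (auto simp: weight_diagram_eq_iff)
  then have "weight_diagram nu \<delta> t = weight_diagram mu \<delta> t"
    using linked_fixes_Circ_Cross[OF assms(1)] by blast
  with label consider
      "weight_diagram mu \<delta> t = Circ" "weight_diagram nu \<delta> t = Circ"
    | "weight_diagram mu \<delta> t = Cross" "weight_diagram nu \<delta> t = Cross"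
    by auto
  then show ?thesis
    by cases (auto simp: weight_diagram_eq_iff)
qed

lemma partition_antimono: "is_partition p \<Longrightarrow> i \<le> j \<Longrightarrow> p j \<le> p i"
  unfolding is_partition_def by blast

lemma inj_partition_diagonal:
  assumes "is_partition p"
  shows "inj (\<lambda>i. int (p i) - int i)"
proof (rule injI, rule ccontr)
  fix i k assume eq: "int (p i) - int i = int (p k) - int k" and "i \<noteq> k"
  then consider "i < k" | "k < i" by linarith
  then show False
    by cases (use eq partition_antimono[OF assms, of i k]
                partition_antimono[OF assms, of k i] in linarith)+
qed

lemma partition_rem_corner:
  assumes "is_partition p" and "p (Suc k) < p k"
  shows "p(k := p k - 1) \<in> rem_box p"
proof -
  have "(p(k := p k - 1)) j \<le> (p(k := p k - 1)) i" if "i \<le> j" for i j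
    using that assms partition_antimono[OF assms(1), of i j]
      partition_antimono[OF assms(1), of "Suc k" j]
    by (cases "i = k"; cases "j = k") auto
  moreover have "finite {i. (p(k := p k - 1)) i \<noteq> 0}"
    using assms(1) unfolding is_partition_def
    by (rule conjE) (erule finite_subset[rotated], auto)
  ultimately show ?thesis
    using assms(2) unfolding rem_box_def is_partition_def by (auto intro: exI[of _ k])
qed

lemma I_wedge_eq_range: "I_wedge lam = range (\<lambda>i. int (fst lam i) - int i)"
  unfolding I_wedge_def by auto

lemma I_vee_eq_range: "I_vee lam \<delta> = range (\<lambda>i. of_nat (Suc i) - \<delta> - of_nat (snd lam i))"
  unfolding I_vee_def by auto

lemma range_fun_upd_inj: "inj f \<Longrightarrow> range (f(k := v)) = insert v (range f - {f k})"
  by (auto simp: fun_upd_image inj_eq)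

lemma I_wedge_rem_corner:
  assumes "is_partition p" and "0 < p k"
  shows "I_wedge (p(k := p k - 1), q) = insert (int (p k) - int k - 1) (I_wedge (p, q) - {int (p k) - int k})"
proof -
  have "(\<lambda>i. int ((p(k := p k - 1)) i) - int i) = (\<lambda>i. int (p i) - int i)(k := int (p k) - int k - 1)"
    using assms(2) by (intro ext) (simp add: of_nat_diff Suc_le_eq)
  then show ?thesis
    unfolding I_wedge_eq_range fst_conv
    by (simp only: range_fun_upd_inj[OF inj_partition_diagonal[OF assms(1)]])
qed

lemma I_vee_rem_corner:
  fixes \<delta> :: "'k::field_char_0"
  assumes "is_partition q" and "0 < q k"
  shows "I_vee (p, q(k := q k - 1)) \<delta>
    = insert (of_nat (Suc k) - \<delta> - of_nat (q k) + 1) (I_vee (p, q) \<delta> - {of_nat (Suc k) - \<delta> - of_nat (q k)})"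
proof -
  have "inj (\<lambda>i. of_nat (Suc i) - \<delta> - of_nat (q i))"
  proof (rule injI)
    fix i j assume "of_nat (Suc i) - \<delta> - of_nat (q i) = of_nat (Suc j) - \<delta> - of_nat (q j)"
    then have "(of_int (int (q i) - int i) :: 'k) = of_int (int (q j) - int j)"
      by (simp add: algebra_simps)
    then have "int (q i) - int i = int (q j) - int j"
      by (rule of_int_eq_iff[THEN iffD1])
    then show "i = j"
      by (rule injD[OF inj_partition_diagonal[OF assms(1)]])
  qed
  moreover have "(\<lambda>i. of_nat (Suc i) - \<delta> - of_nat ((q(k := q k - 1)) i))
      = (\<lambda>i. of_nat (Suc i) - \<delta> - of_nat (q i))(k := of_nat (Suc k) - \<delta> - of_nat (q k) + 1)"
    using assms(2) by (intro ext) (simp add: of_nat_diff Suc_le_eq)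
  ultimately show ?thesis
    unfolding I_vee_eq_range snd_conv by (simp only: range_fun_upd_inj)
qed

lemma I_wedge_gap_imp_corner:
  assumes "is_partition p" and "int (p k) - int k - 1 \<notin> I_wedge (p, q)"
  shows "p (Suc k) < p k"
proof (rule ccontr)
  assume "\<not> p (Suc k) < p k"
  then have "int (p k) - int k - 1 = int (p (Suc k)) - int (Suc k)"
    using partition_antimono[OF assms(1), of k "Suc k"] by simp
  then have "int (p k) - int k - 1 \<in> I_wedge (p, q)"
    unfolding I_wedge_eq_range fst_conv by (rule range_eqI)
  with assms(2) show False by contradiction
qed

lemma I_vee_gap_imp_corner:
  fixes \<delta> :: "'k::field_char_0"
  assumes "is_partition q" and "of_nat (Suc k) - \<delta> - of_nat (q k) + 1 \<notin> I_vee (p, q) \<delta>"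
  shows "q (Suc k) < q k"
proof (rule ccontr)
  assume "\<not> q (Suc k) < q k"
  then have "of_nat (Suc k) - \<delta> - of_nat (q k) + 1 = of_nat (Suc (Suc k)) - \<delta> - of_nat (q (Suc k))"
    using partition_antimono[OF assms(1), of k "Suc k"] by simp
  then have "of_nat (Suc k) - \<delta> - of_nat (q k) + 1 \<in> I_vee (p, q) \<delta>"
    unfolding I_vee_eq_range snd_conv by (rule range_eqI)
  with assms(2) show False by contradiction
qed

lemma Rem_bullet_linked_adjacent_labels:
  fixes \<delta> :: "'k::field_char_0"
  assumes "is_partition (fst lam)"
    and linked: "\<forall>mu \<in> Rem_bullet lam. \<exists>nu \<in> Add_circ lam. D nu mu \<delta> = 1"
  shows "(weight_diagram lam \<delta> j, weight_diagram lam \<delta> (j + 1))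
           \<notin> {(Vee, Wedge), (Circ, Wedge), (Vee, Cross)}"
proof
  assume bad: "(weight_diagram lam \<delta> j, weight_diagram lam \<delta> (j + 1))
                 \<in> {(Vee, Wedge), (Circ, Wedge), (Vee, Cross)}"
  obtain p q where lam: "lam = (p, q)" by fastforce
  have p: "is_partition p" using assms(1) lam by simp
  have j: "j \<notin> I_wedge lam" "j + 1 \<in> I_wedge lam"
    using bad by (auto simp: weight_diagram_eq_iff)
  then obtain k where k: "j + 1 = int (p k) - int k"
    unfolding lam I_wedge_def by auto
  have j_pred: "j = int (p k) - int k - 1"
    using k by simp
  then have corner: "p (Suc k) < p k"
    using I_wedge_gap_imp_corner[OF p, of k q] j(1) lam by simp
  define mu where "mu = (p(k := p k - 1), q)"
  have "mu \<in> Rem_bullet lam"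
    using partition_rem_corner[OF p corner] unfolding mu_def lam Rem_bullet_def by simp
  then obtain nu where nu: "nu \<in> Add_circ lam" "D nu mu \<delta> = 1"
    using linked by blast
  have diagrams: "linked (weight_diagram nu \<delta>) (weight_diagram mu \<delta>)"
    using nu(2) unfolding D_def by (simp split: if_splits)
  have nu_wedge: "I_wedge nu = I_wedge lam"
    using nu(1) unfolding Add_circ_def I_wedge_def by auto
  have mu_vee: "I_vee mu \<delta> = I_vee lam \<delta>"
    unfolding mu_def lam I_vee_def by simp
  have mu_wedge: "I_wedge mu = insert j (I_wedge lam - {j + 1})"
    using I_wedge_rem_corner[OF p, of k q] corner unfolding mu_def lam j_pred by simp
  consider "of_int j \<in> I_vee lam \<delta>" | "of_int (j + 1) \<notin> I_vee lam \<delta>"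
    using bad by (auto simp: weight_diagram_eq_iff)
  then show False
  proof cases
    case 1
    then have "j \<in> I_wedge mu" "of_int j \<in> I_vee mu \<delta>"
      using mu_wedge mu_vee by simp_all
    then have "j \<in> I_wedge nu"
      using linked_weight_diagram_memberships[OF diagrams, of j] by simp
    with j(1) nu_wedge show False by simp
  next
    case 2
    then have "j + 1 \<notin> I_wedge mu" "of_int (j + 1) \<notin> I_vee mu \<delta>"
      using mu_wedge mu_vee by simp_all
    then have "j + 1 \<notin> I_wedge nu"
      using linked_weight_diagram_memberships[OF diagrams, of "j + 1"] by simp
    with j(2) nu_wedge show False by simp
  qed
qed

lemma Rem_circ_linked_adjacent_labels:
  fixes \<delta> :: "'k::field_char_0"
  assumes "is_partition (snd lam)"
    and linked: "\<forall>mu \<in> Rem_circ lam. \<exists>nu \<in> Add_bullet lam. D nu mu \<delta> = 1"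
  shows "(weight_diagram lam \<delta> j, weight_diagram lam \<delta> (j + 1))
           \<notin> {(Vee, Wedge), (Vee, Circ), (Cross, Wedge)}"
proof
  assume bad: "(weight_diagram lam \<delta> j, weight_diagram lam \<delta> (j + 1))
                 \<in> {(Vee, Wedge), (Vee, Circ), (Cross, Wedge)}"
  obtain p q where lam: "lam = (p, q)" by fastforce
  have q: "is_partition q" using assms(1) lam by simp
  have j: "of_int j \<in> I_vee lam \<delta>" "of_int (j + 1) \<notin> I_vee lam \<delta>"
    using bad by (auto simp: weight_diagram_eq_iff)
  then obtain k where k: "of_int j = of_nat (Suc k) - \<delta> - of_nat (q k)"
    unfolding lam I_vee_def by auto
  have "of_int (j + 1) = of_nat (Suc k) - \<delta> - of_nat (q k) + 1"
    using k by simp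
  then have corner: "q (Suc k) < q k"
    using I_vee_gap_imp_corner[OF q, of k \<delta> p] j(2) lam by simp
  define mu where "mu = (p, q(k := q k - 1))"
  have "mu \<in> Rem_circ lam"
    using partition_rem_corner[OF q corner] unfolding mu_def lam Rem_circ_def by simp
  then obtain nu where nu: "nu \<in> Add_bullet lam" "D nu mu \<delta> = 1"
    using linked by blast
  have diagrams: "linked (weight_diagram nu \<delta>) (weight_diagram mu \<delta>)"
    using nu(2) unfolding D_def by (simp split: if_splits)
  have nu_vee: "I_vee nu \<delta> = I_vee lam \<delta>"
    using nu(1) unfolding Add_bullet_def I_vee_def by auto
  have mu_wedge: "I_wedge mu = I_wedge lam"
    unfolding mu_def lam I_wedge_def by simp
  have mu_vee: "I_vee mu \<delta> = insert (of_int (j + 1)) (I_vee lam \<delta> - {of_int j})"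
    using I_vee_rem_corner[OF q, of k p \<delta>] corner k unfolding mu_def lam by simp
  consider "j + 1 \<in> I_wedge lam" | "j \<notin> I_wedge lam"
    using bad by (auto simp: weight_diagram_eq_iff)
  then show False
  proof cases
    case 1
    then have "j + 1 \<in> I_wedge mu" "of_int (j + 1) \<in> I_vee mu \<delta>"
      using mu_wedge mu_vee by simp_all
    then have "of_int (j + 1) \<in> I_vee nu \<delta>"
      using linked_weight_diagram_memberships[OF diagrams, of "j + 1"] by simp
    with j(2) nu_vee show False by simp
  next
    case 2
    then have "j \<notin> I_wedge mu" "of_int j \<notin> I_vee mu \<delta>"
      using mu_wedge mu_vee by simp_all
    then have "of_int j \<notin> I_vee nu \<delta>"
      using linked_weight_diagram_memberships[OF diagrams, of j] by simp
    with j(1) nu_vee show False by simp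
  qed
qed

theorem proposition2p5:
  fixes \<delta> :: "'k::field_char_0" and lam :: bipartition
  assumes "is_bipartition lam"
  shows "((\<forall>mu \<in> Rem_bullet lam. \<exists>nu \<in> Add_circ lam. D nu mu \<delta> = 1) \<longrightarrow>
           \<not> (\<exists>j. (weight_diagram lam \<delta> j, weight_diagram lam \<delta> (j + 1))
                    \<in> {(Vee, Wedge), (Circ, Wedge), (Vee, Cross)}))
       \<and> ((\<forall>mu \<in> Rem_circ lam. \<exists>nu \<in> Add_bullet lam. D nu mu \<delta> = 1) \<longrightarrow>
           \<not> (\<exists>j. (weight_diagram lam \<delta> j, weight_diagram lam \<delta> (j + 1))
                    \<in> {(Vee, Wedge), (Vee, Circ), (Cross, Wedge)}))"
  using assms Rem_bullet_linked_adjacent_labels Rem_circ_linked_adjacent_labels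
  unfolding is_bipartition_def by blast

end
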